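(* If $\omega_r\in\mathrm{Eval}(G/\Omega_j)$ with multiplicity $m$, then $\omega_{r+\aleph p}\in\mathrm{Eval}(G/\Omega_j)$ with multiplicity $m$, for all $p=1,\dots,k/\aleph$.
   Context: Non-singular monad matrices are $(A,B,C,D)$ with $A\in GL(k,\mathbb{C})$, $B\in Mat_{k\times k}(\mathbb{C})$, $C\in Mat_{k\times 2}(\mathbb{C})$, $D\in Mat_{2\times k}(\mathbb{C})$, satisfying $[A,B]+CD=0$ and the full-rank conditions. Fix $j\in\mathbb{Z}_{2k}$ even; $(A,B,C,D)$ is such that there is $G\in GL(k,\mathbb{C})$ with $e^{\imath\frac{2j\pi}{k}}A=GAG^{-1}$, $e^{\imath\frac{2\pi}{k}}B=GBG^{-1}$, $e^{\imath\frac{\pi}{k}}C=GC\,\mathrm{adj}(\sigma_{2j\pi/k})$, $e^{\imath\frac{\pi}{k}}D=\sigma_{2j\pi/k}DG^{-1}$ ($\sigma_\varphi=\mathrm{diag}(e^{-\imath\frac{3\varphi}{4}},e^{-\imath\frac{\varphi}{4}})$, $\mathrm{adj}(\sigma)=\det(\sigma)\sigma^{-1}$), in a basis where $G=\Omega_j\,\mathrm{diag}\{x_1,\dots,x_k\}$ with $x_r$ $k$-th roots of unity. Notation: $\aleph=\gcd(j,k)$, $\Omega_j=e^{\imath\frac{(2-j)\pi}{2k}}$, $\omega_r=e^{\imath\frac{2\pi r}{k}}$ (indices mod $k$). *)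

theory Defs
  imports "Jordan_Normal_Form.Jordan_Normal_Form" "HOL-Computational_Algebra.Polynomial"
begin

(* omega_r = e^{i 2 pi r / k}; indices taken mod k automatically *)
definition omega :: "nat \<Rightarrow> int \<Rightarrow> complex" where
  "omega k r = exp (\<i> * of_real (2 * pi * real_of_int r / real k))"

definition Omega :: "nat \<Rightarrow> nat \<Rightarrow> complex" where
  "Omega k j = exp (\<i> * of_real ((2 - real j) * pi / (2 * real k)))"

definition sigma :: "real \<Rightarrow> complex mat" where
  "sigma \<phi> = mat 2 2 (\<lambda>(a, b). if a = b then
      (if a = 0 then exp (- \<i> * of_real (3 * \<phi> / 4)) else exp (- \<i> * of_real (\<phi> / 4)))
    else 0)"

(* adj(sigma) = det(sigma) sigma^{-1} (classical adjugate) *)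
definition adj :: "complex mat \<Rightarrow> complex mat" where
  "adj S = adj_mat S"

(* non-singular monad matrices: A in GL(k), B k x k, C k x 2, D 2 x k,
   [A,B] + CD = 0, and the full-rank conditions: for all x, y in C,
   alpha(x,y) = (A - x; B - y; D) is injective and
   beta(x,y) = (-(B - y), A - x, C) is surjective (equivalently its
   transpose is injective). *)
definition nonsingular_monad ::
  "nat \<Rightarrow> complex mat \<Rightarrow> complex mat \<Rightarrow> complex mat \<Rightarrow> complex mat \<Rightarrow> bool" where
  "nonsingular_monad k A B C D \<longleftrightarrow>
     A \<in> carrier_mat k k \<and> B \<in> carrier_mat k k \<and> C \<in> carrier_mat k 2 \<and> D \<in> carrier_mat 2 k \<and>
     invertible_mat A \<and>
     (A * B - B * A) + C * D = 0\<^sub>m k k \<and>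
     (\<forall>x y. \<forall>v \<in> carrier_vec k.
        (A - x \<cdot>\<^sub>m 1\<^sub>m k) *\<^sub>v v = 0\<^sub>v k \<and> (B - y \<cdot>\<^sub>m 1\<^sub>m k) *\<^sub>v v = 0\<^sub>v k \<and> D *\<^sub>v v = 0\<^sub>v 2
        \<longrightarrow> v = 0\<^sub>v k) \<and>
     (\<forall>x y. \<forall>w \<in> carrier_vec k.
        transpose_mat (A - x \<cdot>\<^sub>m 1\<^sub>m k) *\<^sub>v w = 0\<^sub>v k \<and> transpose_mat (B - y \<cdot>\<^sub>m 1\<^sub>m k) *\<^sub>v w = 0\<^sub>v k \<and> transpose_mat C *\<^sub>v w = 0\<^sub>v 2
        \<longrightarrow> w = 0\<^sub>v k)"

end

theory Submission
  imports Defs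
begin

text \<open>Conjugation by the diagonal matrix \<open>G\<close> multiplies \<open>A\<close> by \<open>c = \<omega>\<^sub>j\<close>, so every nonzero entry
  \<open>A\<^sub>i\<^sub>t\<close> forces \<open>x\<^sub>i = c x\<^sub>t\<close>. Since \<open>A\<close> is invertible, some permutation \<open>\<pi>\<close> has all \<open>A\<^sub>i\<^sub>,\<^sub>\<pi>\<^sub>i \<noteq> 0\<close>,
  and \<open>\<pi>\<close> maps the eigenvalue-\<open>\<nu>\<close> positions injectively into the eigenvalue-\<open>\<nu>/c\<close> positions.
  As \<open>c\<close> is a \<open>k\<close>-th root of unity, going once around the cycle turns these inequalities of
  multiplicities into equalities. Finally, modulo \<open>k\<close> the multiples of \<open>j\<close> are exactly the multiples
  of \<open>\<aleph> = gcd j k\<close>, so the powers of \<open>c\<close> are exactly the \<open>\<omega>\<^bsub>\<aleph>p\<^esub>\<close>.\<close>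

lemma order_prod_linear_factors:
  "order (l :: 'a :: idom) (\<Prod>a\<leftarrow>xs. [:-a, 1:]) = length (filter (\<lambda>a. a = l) xs)"
proof (induction xs)
  case Nil
  then show ?case by (simp add: order_0I)
next
  case (Cons a xs)
  have "(\<Prod>a\<leftarrow>xs. [:-a, 1:]) \<noteq> (0 :: 'a poly)"
    unfolding prod_list_zero_iff by auto
  then have "order l ([:-a, 1:] * (\<Prod>a\<leftarrow>xs. [:-a, 1:]))
      = order l [:-a, 1:] + order l (\<Prod>a\<leftarrow>xs. [:-a, 1:])"
    by (intro order_mult no_zero_divisors) simp_all
  moreover have "order l [:-a, 1:] = (if a = l then 1 else 0)"
    using order_power_n_n[of l 1] by (auto simp: order_0I)
  ultimately show ?case using Cons by simp
qed

lemma order_char_poly_mat_diag: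
  "order v (char_poly (mat_diag n f :: 'a :: field mat)) = card {i. i < n \<and> f i = v}"
proof -
  have cp: "char_poly (mat_diag n f) = (\<Prod>a\<leftarrow>map f [0..<n]. [:-a, 1:])"
    by (subst char_poly_upper_triangular[of _ n])
      (auto simp: upper_triangular_def mat_diag_def diag_mat_def
        intro!: arg_cong[where f = prod_list] map_cong)
  show ?thesis
    unfolding cp order_prod_linear_factors length_filter_conv_card
    by (simp, intro arg_cong[where f = card]) auto
qed

lemma eigenvalue_iff_order_char_poly:
  assumes "(A :: 'a :: field mat) \<in> carrier_mat n n"
  shows "eigenvalue A v \<longleftrightarrow> order v (char_poly A) \<noteq> 0"
proof -
  have "char_poly A \<noteq> 0"
    using degree_monic_char_poly[OF assms] by auto
  then show ?thesis
    by (simp add: eigenvalue_root_char_poly[OF assms] order_root)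
qed

lemma det_nonzero_if_invertible_mat:
  assumes A: "(A :: 'a :: field mat) \<in> carrier_mat n n" and "invertible_mat A"
  shows "det A \<noteq> 0"
proof -
  from \<open>invertible_mat A\<close> obtain B where AB: "A * B = 1\<^sub>m n" and BA: "B * A = 1\<^sub>m (dim_row B)"
    using A unfolding invertible_mat_def inverts_mat_def by auto
  have "dim_col B = n" using AB by (metis index_mult_mat(3) index_one_mat(3))
  moreover have "dim_row B = n" using BA A by (metis carrier_matD(2) index_mult_mat(3) index_one_mat(3))
  ultimately have B: "B \<in> carrier_mat n n" by auto
  have "det A * det B = 1" using det_mult[OF A B] AB by simp
  then show ?thesis by auto
qed

lemma twisted_commute_of_conj:
  fixes A G Gi :: "'a :: comm_ring_1 mat"
  assumes A: "A \<in> carrier_mat n n" and G: "G \<in> carrier_mat n n" and Gi: "Gi \<in> carrier_mat n n"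
    and "Gi * G = 1\<^sub>m n" and conj: "c \<cdot>\<^sub>m A = G * A * Gi"
  shows "(c \<cdot>\<^sub>m A) * G = G * A"
proof -
  have "(c \<cdot>\<^sub>m A) * G = G * A * (Gi * G)"
    unfolding conj using A G Gi by (metis assoc_mult_mat mult_carrier_mat)
  also have "\<dots> = G * A"
    using right_mult_one_mat[OF mult_carrier_mat[OF G A]] \<open>Gi * G = 1\<^sub>m n\<close> by simp
  finally show ?thesis .
qed

lemma mat_diag_twisted_commute_entry:
  fixes A :: "'a :: field mat"
  assumes A: "A \<in> carrier_mat n n" and comm: "(c \<cdot>\<^sub>m A) * mat_diag n y = mat_diag n y * A"
    and i: "i < n" and t: "t < n" and nz: "A $$ (i, t) \<noteq> 0"
  shows "y i = c * y t"
proof -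
  have "((c \<cdot>\<^sub>m A) * mat_diag n y) $$ (i, t) = c * A $$ (i, t) * y t"
    using A i t by (subst mat_diag_mult_right[of _ n]) auto
  moreover have "(mat_diag n y * A) $$ (i, t) = y i * A $$ (i, t)"
    using A i t by (subst mat_diag_mult_left[of _ n]) auto
  ultimately have "A $$ (i, t) * (y i - c * y t) = 0"
    using comm by (simp add: algebra_simps)
  then show ?thesis using nz by simp
qed

lemma card_level_le_of_twisted_commute:
  fixes A :: "'a :: field mat"
  assumes A: "A \<in> carrier_mat n n" and det: "det A \<noteq> 0" and c: "c \<noteq> 0"
    and comm: "(c \<cdot>\<^sub>m A) * mat_diag n y = mat_diag n y * A"
  shows "card {i. i < n \<and> y i = v} \<le> card {i. i < n \<and> y i = v / c}"
proof -
  from det obtain \<pi> where \<pi>: "\<pi> permutes {0..<n}" and "(\<Prod>i = 0..<n. A $$ (i, \<pi> i)) \<noteq> 0"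
    unfolding det_def'[OF A] by (metis (no_types, lifting) mem_Collect_eq mult_zero_right sum.neutral)
  then have nz: "A $$ (i, \<pi> i) \<noteq> 0" if "i < n" for i
    using that by (auto simp: prod_zero_iff)
  have \<pi>_lt: "\<pi> i < n" if "i < n" for i
    using \<pi> that by (auto dest: permutes_in_image)
  have "inj_on \<pi> {i. i < n \<and> y i = v}"
    using permutes_inj[OF \<pi>] by (auto intro: inj_on_subset)
  moreover have "\<pi> ` {i. i < n \<and> y i = v} \<subseteq> {i. i < n \<and> y i = v / c}"
  proof clarify
    fix i assume "i < n"
    then have "y i = c * y (\<pi> i)"
      using mat_diag_twisted_commute_entry[OF A comm _ _ nz] \<pi>_lt by blast
    then show "\<pi> i < n \<and> y (\<pi> i) = y i / c"
      using \<open>i < n\<close> \<pi>_lt c by simp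
  qed
  ultimately show ?thesis by (intro card_inj_on_le) auto
qed

lemma le_along_cycle_imp_eq:
  fixes f :: "'a :: monoid_mult \<Rightarrow> 'b :: order"
  assumes le: "\<And>v. f v \<le> f (v * d)" and "d ^ N = 1" and "N > 0"
  shows "f (v * d) = f v"
proof -
  have le_pow: "f w \<le> f (w * d ^ m)" for w m
  proof (induction m)
    case 0 then show ?case by simp
  next
    case (Suc m)
    also have "f (w * d ^ m) \<le> f (w * d ^ m * d)" by (rule le)
    finally show ?case by (simp add: power_commutes mult.assoc)
  qed
  obtain M where "N = Suc M" using \<open>N > 0\<close> gr0_conv_Suc by blast
  have "f (v * d) \<le> f (v * d * d ^ M)" by (rule le_pow)
  also have "v * d * d ^ M = v"
    using \<open>d ^ N = 1\<close> \<open>N = Suc M\<close> by (simp add: mult.assoc)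
  finally show ?thesis using le[of v] by (rule antisym)
qed

lemma card_level_invariant_of_twisted_commute:
  fixes A :: "'a :: field mat"
  assumes A: "A \<in> carrier_mat n n" and det: "det A \<noteq> 0" and root: "c ^ N = 1" "N > 0"
    and comm: "(c \<cdot>\<^sub>m A) * mat_diag n y = mat_diag n y * A"
  shows "card {i. i < n \<and> y i = v * c ^ m} = card {i. i < n \<and> y i = v}"
proof -
  define f where "f w = card {i. i < n \<and> y i = w}" for w
  have c: "c \<noteq> 0" using root by (cases N) auto
  have "f w \<le> f (w * inverse c)" for w
    unfolding f_def using card_level_le_of_twisted_commute[OF A det c comm] by (simp add: divide_inverse)
  moreover have "inverse c ^ N = 1" using root by (simp add: power_inverse)
  ultimately have shift_inverse: "f (w * inverse c) = f w" for w
    by (rule le_along_cycle_imp_eq[of f, OF _ _ root(2)])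
  have shift: "f (w * c) = f w" for w
    using shift_inverse[of "w * c"] c by (simp add: mult.assoc)
  show ?thesis
    unfolding f_def[symmetric]
    by (induction m) (simp, metis shift power_Suc2 mult.assoc)
qed

lemma omega_add: "omega k a * omega k b = omega k (a + b)"
  unfolding omega_def by (simp add: exp_add[symmetric] field_simps add_divide_distrib)

lemma omega_power: "omega k a ^ n = omega k (int n * a)"
  unfolding omega_def by (simp add: exp_of_nat_mult[symmetric] field_simps)

lemma omega_mod_eq:
  assumes "k > 0" and "a mod int k = b mod int k"
  shows "omega k a = omega k b"
proof -
  from assms(2) obtain q where q: "a = b + int k * q"
    by (metis mod_eqE mult.commute)
  have "2 * pi * real_of_int a / real k = 2 * pi * real_of_int b / real k + 2 * pi * real_of_int q"
    using assms(1) by (simp add: q field_simps)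
  moreover have "exp (\<i> * of_real (2 * pi * real_of_int q)) = 1"
    using cis_multiple_2pi[of "real_of_int q"] by (simp add: cis_conv_exp mult.commute)
  ultimately show ?thesis
    unfolding omega_def by (simp add: distrib_left exp_add)
qed

lemma omega_power_self:
  assumes "k > 0"
  shows "omega k a ^ k = 1"
proof -
  have "omega k a ^ k = omega k 0"
    unfolding omega_power using assms by (intro omega_mod_eq) auto
  then show ?thesis by (simp add: omega_def)
qed

lemma exists_mult_mod_eq_gcd_mult: "\<exists>u. (j * u) mod k = (gcd j k * p) mod (k :: nat)"
proof (cases "j = 0")
  case True
  then show ?thesis by simp
next
  case False
  then obtain u v where "j * u = k * v + gcd j k"
    using bezout_nat by blast
  then have "j * (u * p) = gcd j k * p + k * (v * p)"
    by (metis add.commute add_mult_distrib mult.assoc mult.commute)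
  then show ?thesis by (metis mod_mult_self2)
qed

theorem mainTheorem9:
  fixes k j :: nat and A B C D G Gi :: "complex mat" and x :: "nat \<Rightarrow> complex"
    and r :: int and m :: nat
  assumes k_pos: "k > 0"
    and j_range: "j < 2 * k" and j_even: "even j"
    and monad: "nonsingular_monad k A B C D"
    and G_carrier: "G \<in> carrier_mat k k" and G_inv: "Gi \<in> carrier_mat k k" and G_inv2: "G * Gi = 1\<^sub>m k" and G_inv3: "Gi * G = 1\<^sub>m k"
    and G_diag: "G = Omega k j \<cdot>\<^sub>m mat_diag k x"
    and x_roots: "\<forall>s < k. x s ^ k = 1"
    and symA: "exp (\<i> * of_real (2 * real j * pi / real k)) \<cdot>\<^sub>m A = G * A * Gi"
    and symB: "exp (\<i> * of_real (2 * pi / real k)) \<cdot>\<^sub>m B = G * B * Gi"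
    and symC: "exp (\<i> * of_real (pi / real k)) \<cdot>\<^sub>m C = G * C * adj (sigma (2 * real j * pi / real k))"
    and symD: "exp (\<i> * of_real (pi / real k)) \<cdot>\<^sub>m D = sigma (2 * real j * pi / real k) * D * Gi"
    and ev: "eigenvalue ((1 / Omega k j) \<cdot>\<^sub>m G) (omega k r)"
    and mult: "order (omega k r) (char_poly ((1 / Omega k j) \<cdot>\<^sub>m G)) = m"
  shows "\<forall>p \<in> {1 .. k div gcd j k}.
           eigenvalue ((1 / Omega k j) \<cdot>\<^sub>m G) (omega k (r + int (gcd j k * p))) \<and>
           order (omega k (r + int (gcd j k * p))) (char_poly ((1 / Omega k j) \<cdot>\<^sub>m G)) = m"
proof -
  define y where "y i = Omega k j * x i" for i
  have Om: "Omega k j \<noteq> 0" by (simp add: Omega_def)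
  have G_y: "G = mat_diag k y"
    unfolding G_diag y_def by (rule eq_matI) (auto simp: mat_diag_def)
  have M: "(1 / Omega k j) \<cdot>\<^sub>m G = mat_diag k x"
    unfolding G_y y_def using Om by (intro eq_matI) (auto simp: mat_diag_def)
  have A: "A \<in> carrier_mat k k" and "invertible_mat A"
    using monad unfolding nonsingular_monad_def by blast+
  have "omega k (int j) \<cdot>\<^sub>m A = G * A * Gi"
    using symA by (simp add: omega_def mult_ac)
  then have comm: "(omega k (int j) \<cdot>\<^sub>m A) * mat_diag k y = mat_diag k y * A"
    using twisted_commute_of_conj[OF A G_carrier G_inv G_inv3] G_y by simp
  have shift_invariant:
    "order (omega k r * omega k (int j) ^ u) (char_poly ((1 / Omega k j) \<cdot>\<^sub>m G)) = m" for u
    using card_level_invariant_of_twisted_commute[OF A det_nonzero_if_invertible_mat[OF A]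
        omega_power_self[OF k_pos] k_pos comm, of "Omega k j * omega k r" u]
      \<open>invertible_mat A\<close> mult Om
    unfolding M order_char_poly_mat_diag y_def by (simp add: mult.assoc)
  show ?thesis
  proof
    fix p
    obtain u where u: "(j * u) mod k = (gcd j k * p) mod k"
      using exists_mult_mod_eq_gcd_mult by blast
    have "int (gcd j k * p) mod int k = int u * int j mod int k"
      using u by (metis mult.commute of_nat_mod of_nat_mult)
    then have "(r + int (gcd j k * p)) mod int k = (r + int u * int j) mod int k"
      by (metis mod_add_right_eq)
    then have "omega k (r + int (gcd j k * p)) = omega k r * omega k (int j) ^ u"
      unfolding omega_power omega_add by (rule omega_mod_eq[OF k_pos])
    then show "eigenvalue ((1 / Omega k j) \<cdot>\<^sub>m G) (omega k (r + int (gcd j k * p))) \<and>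
        order (omega k (r + int (gcd j k * p))) (char_poly ((1 / Omega k j) \<cdot>\<^sub>m G)) = m"
      using shift_invariant ev mult
        eigenvalue_iff_order_char_poly[OF smult_carrier_mat[OF G_carrier]] by metis
  qed
qed

end
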